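(* Let $t\ge2$, $n_1,\dots,n_t\ge1$, $n=n_1+\dots+n_t$, and let $G=K_{n_1,\dots,n_t}$ be the complete multipartite graph with partite sets $Y_1,\dots,Y_t$, $|Y_i|=n_i$. Then the inclusion-minimal skew forcing sets of $G$ are exactly the sets $V(G)\setminus\{u,v\}$ with $u,v$ in different partite sets; these are exactly the vertices of $\mathfrak{Z}^-(G)$ of cardinality $n-2$, and each has degree $2$ in $\mathfrak{Z}^-(G)$. Every set $V(G)\setminus\{y\}$ with $y\in Y_i$ is a skew forcing set and has degree $n-n_i+1$ in $\mathfrak{Z}^-(G)$. Moreover $\mathfrak{Z}^-(G)$ is unique: if $G'$ is a graph with no isolated vertices and $\mathfrak{Z}^-(G')\cong\mathfrak{Z}^-(G)$, then $G'\cong G$.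
   Context: All graphs are finite, simple, undirected. Skew color change rule: with $W$ the set of white (non-blue) vertices, any vertex $u$ (blue or white) may color a white vertex $w$ blue if $N(u)\cap W=\{w\}$. $S$ is a skew forcing set if starting with exactly $S$ blue and applying the rule repeatedly, all vertices become blue. The skew TAR graph $\mathfrak{Z}^-(G)$ has as vertices the skew forcing sets of $G$, with $S_1S_2$ an edge iff $|S_1\ominus S_2|=1$ (symmetric difference). A complete multipartite graph $K_{n_1,\dots,n_t}$ has vertex set partitioned into sets of sizes $n_1,\dots,n_t$, with exactly the edges between vertices in distinct parts. *)

theory Defs
  imports Main
begin

definition simple_graph :: "'a set \<Rightarrow> ('a \<Rightarrow> 'a \<Rightarrow> bool) \<Rightarrow> bool" where
  "simple_graph V E \<longleftrightarrow> finite V \<and> (\<forall>x y. E x y \<longrightarrow> x \<in> V \<and> y \<in> V)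
     \<and> (\<forall>x y. E x y \<longrightarrow> E y x) \<and> (\<forall>x. \<not> E x x)"

definition nbhd :: "('a \<Rightarrow> 'a \<Rightarrow> bool) \<Rightarrow> 'a \<Rightarrow> 'a set" where
  "nbhd E u = {v. E u v}"

text \<open>One application of the skew color change rule: blue set B becomes
  insert w B, where w is white and some vertex u (blue or white) has w as its
  unique white neighbour.\<close>
definition skew_step :: "'a set \<Rightarrow> ('a \<Rightarrow> 'a \<Rightarrow> bool) \<Rightarrow> 'a set \<Rightarrow> 'a set \<Rightarrow> bool" where
  "skew_step V E B B' \<longleftrightarrow> (\<exists>u\<in>V. \<exists>w\<in>V - B.
      nbhd E u \<inter> (V - B) = {w} \<and> B' = insert w B)"

definition skew_forcing_set :: "'a set \<Rightarrow> ('a \<Rightarrow> 'a \<Rightarrow> bool) \<Rightarrow> 'a set \<Rightarrow> bool" where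
  "skew_forcing_set V E S \<longleftrightarrow> S \<subseteq> V \<and> (skew_step V E)\<^sup>*\<^sup>* S V"

definition minimal_skew_forcing_set :: "'a set \<Rightarrow> ('a \<Rightarrow> 'a \<Rightarrow> bool) \<Rightarrow> 'a set \<Rightarrow> bool" where
  "minimal_skew_forcing_set V E S \<longleftrightarrow> skew_forcing_set V E S \<and>
      (\<forall>T. T \<subset> S \<longrightarrow> \<not> skew_forcing_set V E T)"

definition skew_TAR_vertices :: "'a set \<Rightarrow> ('a \<Rightarrow> 'a \<Rightarrow> bool) \<Rightarrow> 'a set set" where
  "skew_TAR_vertices V E = {S. skew_forcing_set V E S}"

definition TAR_adj :: "'a set \<Rightarrow> 'a set \<Rightarrow> bool" where
  "TAR_adj S T \<longleftrightarrow> card ((S - T) \<union> (T - S)) = 1"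

definition skew_TAR_degree :: "'a set \<Rightarrow> ('a \<Rightarrow> 'a \<Rightarrow> bool) \<Rightarrow> 'a set \<Rightarrow> nat" where
  "skew_TAR_degree V E S = card {T \<in> skew_TAR_vertices V E. TAR_adj S T}"

definition graph_iso :: "'a set \<Rightarrow> ('a \<Rightarrow> 'a \<Rightarrow> bool) \<Rightarrow> 'b set \<Rightarrow> ('b \<Rightarrow> 'b \<Rightarrow> bool) \<Rightarrow> bool" where
  "graph_iso V E V' E' \<longleftrightarrow> (\<exists>f. bij_betw f V V' \<and>
      (\<forall>x\<in>V. \<forall>y\<in>V. E x y \<longleftrightarrow> E' (f x) (f y)))"

text \<open>Complete multipartite graph K_{ns 0, ..., ns (t-1)}: vertex (i,j) is the
  j-th vertex of part Y_i.\<close>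
definition cmp_V :: "nat \<Rightarrow> (nat \<Rightarrow> nat) \<Rightarrow> (nat \<times> nat) set" where
  "cmp_V t ns = {(i, j). i < t \<and> j < ns i}"

definition cmp_E :: "nat \<Rightarrow> (nat \<Rightarrow> nat) \<Rightarrow> nat \<times> nat \<Rightarrow> nat \<times> nat \<Rightarrow> bool" where
  "cmp_E t ns x y \<longleftrightarrow> x \<in> cmp_V t ns \<and> y \<in> cmp_V t ns \<and> fst x \<noteq> fst y"

end

theory Submission
  imports Defs
begin

text \<open>
  In a complete multipartite graph \<open>K\<close> a vertex can force only when every other white vertex
  lies in its own part.
  Running the skew rule backwards therefore shows that the white set of a skew forcing set is
  always a partial transversal of the parts with at most two vertices, and such sets are easily
  seen to be forcing. Minimal forcing sets and the degrees in the skew TAR graph then follow by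
  counting, since the TAR neighbours of \<open>V - A\<close> are the sets \<open>V - (A \<ominus> {s})\<close>.

  For uniqueness let \<open>\<phi>\<close> be an isomorphism from the skew TAR graph of \<open>G'\<close> onto that of
  \<open>K\<close>. The whole vertex set has TAR degree equal to the number of vertices and no vertex has
  larger degree, so \<open>G'\<close> has \<open>n\<close> vertices. If a skew forcing set of \<open>G'\<close> missed three
  vertices, its supersets would contain a path of four TAR vertices of degree at least three; in
  the TAR graph of \<open>K\<close> these are \<open>V\<close> and the sets \<open>V - {y}\<close>, and every edge among them
  contains \<open>V\<close>. So every skew forcing set of \<open>G'\<close> misses at most two vertices, and then
  \<open>V' - {x, y}\<close> is forcing exactly when \<open>xy\<close> is an edge. The degree of \<open>\<phi> V'\<close> shows that
  \<open>\<phi> V' \<noteq> V\<close> happens only when \<open>K\<close> is a star, where toggling the centre is a TAR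
  automorphism, so we may assume \<open>\<phi> V' = V\<close>. Then \<open>\<phi> (V' - {x}) = V - {f x}\<close> defines a
  bijection \<open>f\<close> which maps the forcing sets \<open>V' - {x, y}\<close> to forcing sets \<open>V - {f x, f y}\<close>,
  i.e. edges to edges.
\<close>

lemma card_le_2_cases:
  assumes "finite A" "card A \<le> 2"
  obtains "A = {}" | y where "A = {y}" | u v where "A = {u, v}" "u \<noteq> v"
proof -
  have "card A = 0 \<or> card A = 1 \<or> card A = 2" using assms(2) by linarith
  then show thesis
  proof (elim disjE)
    assume "card A = 0"
    then show thesis using assms(1) that(1) by simp
  next
    assume "card A = 1"
    then obtain y where "A = {y}" by (rule card_1_singletonE)
    then show thesis by (rule that(2))
  next
    assume "card A = 2"
    then show thesis using that(3) by (auto simp: card_2_iff)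
  qed
qed

lemma card_le_1_eq_singleton: "finite A \<Longrightarrow> card A \<le> 1 \<Longrightarrow> a \<in> A \<Longrightarrow> A = {a}"
  by (auto simp: card_le_Suc0_iff_eq)

section \<open>Skew forcing sets\<close>

abbreviation no_isolated_vertices :: "'a set \<Rightarrow> ('a \<Rightarrow> 'a \<Rightarrow> bool) \<Rightarrow> bool" where
  "no_isolated_vertices V E \<equiv> \<forall>x\<in>V. \<exists>y. E x y"

abbreviation large_skew_forcing_sets :: "'a set \<Rightarrow> ('a \<Rightarrow> 'a \<Rightarrow> bool) \<Rightarrow> bool" where
  "large_skew_forcing_sets V E \<equiv> \<forall>S. skew_forcing_set V E S \<longrightarrow> card (V - S) \<le> 2"

lemma skew_forcing_set_subset: "skew_forcing_set V E S \<Longrightarrow> S \<subseteq> V"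
  unfolding skew_forcing_set_def by blast

lemma skew_forcing_set_whole: "skew_forcing_set V E V"
  unfolding skew_forcing_set_def by simp

lemma skew_step_subset: "skew_step V E B B' \<Longrightarrow> B \<subseteq> V \<Longrightarrow> B' \<subseteq> V"
  unfolding skew_step_def by auto

lemma skew_step_mono:
  assumes "skew_step V E B B'" "B \<subseteq> C" "C \<subseteq> V"
  shows "(skew_step V E)\<^sup>*\<^sup>* C (C \<union> B')"
proof -
  obtain u w where u: "u \<in> V" and w: "w \<in> V - B" and nb: "nbhd E u \<inter> (V - B) = {w}"
    and B': "B' = insert w B"
    using assms(1) unfolding skew_step_def by blast
  show ?thesis
  proof (cases "w \<in> C")
    case True
    then show ?thesis using B' assms(2) by (simp add: insert_absorb sup.absorb1)
  next
    case False
    have "skew_step V E C (insert w C)"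
      unfolding skew_step_def using u w nb assms(2) False by blast
    moreover have "insert w C = C \<union> B'" using B' assms(2) by blast
    ultimately show ?thesis by simp
  qed
qed

lemma skew_forcing_set_mono:
  assumes "skew_forcing_set V E S" "S \<subseteq> T" "T \<subseteq> V"
  shows "skew_forcing_set V E T"
proof -
  have "(skew_step V E)\<^sup>*\<^sup>* S V" using assms(1) unfolding skew_forcing_set_def by blast
  then have "(skew_step V E)\<^sup>*\<^sup>* T V" using assms(2,3)
  proof (induction arbitrary: T rule: converse_rtranclp_induct)
    case base
    then show ?case by (simp add: subset_antisym)
  next
    case (step B B')
    have "T \<union> B' \<subseteq> V" using skew_step_subset[OF step(1)] step(4,5) by blast
    then show ?case
      using skew_step_mono[OF step(1) step(4,5)] step(3)[of "T \<union> B'"] by auto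
  qed
  then show ?thesis using assms(3) unfolding skew_forcing_set_def by blast
qed

lemma skew_forcing_set_force:
  assumes "u \<in> V" "W \<subseteq> V" "nbhd E u \<inter> W = {w}"
    and "skew_forcing_set V E (V - (W - {w}))"
  shows "skew_forcing_set V E (V - W)"
proof -
  have "w \<in> W" using assms(3) by blast
  then have "V - (V - W) = W" "insert w (V - W) = V - (W - {w})" using assms(2) by blast+
  then have "skew_step V E (V - W) (V - (W - {w}))"
    unfolding skew_step_def using assms(1,3) \<open>w \<in> W\<close> by auto
  then show ?thesis
    using assms(4) unfolding skew_forcing_set_def by (auto intro: converse_rtranclp_into_rtranclp)
qed

lemma not_skew_forcing_set_twins:
  assumes "\<forall>x y. E x y \<longrightarrow> E y x" "nbhd E u = nbhd E v" "u \<in> V" "v \<in> V" "u \<noteq> v"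
  shows "\<not> skew_forcing_set V E (V - {u, v})"
proof
  assume "skew_forcing_set V E (V - {u, v})"
  moreover have "V - {u, v} \<noteq> V" using assms(3) by blast
  ultimately obtain B' where "skew_step V E (V - {u, v}) B'"
    unfolding skew_forcing_set_def by (auto elim: converse_rtranclpE)
  then obtain x w where x: "nbhd E x \<inter> {u, v} = {w}"
    unfolding skew_step_def using assms(3,4) by (auto simp: Diff_Diff_Int Int_absorb1)
  have "u \<in> nbhd E x \<longleftrightarrow> v \<in> nbhd E x"
    using assms(1,2) unfolding nbhd_def set_eq_iff mem_Collect_eq by blast
  then show False using x assms(5) by (cases "u \<in> nbhd E x") auto
qed

lemma simple_graphD:
  assumes "simple_graph V E"
  shows "finite V" "E x y \<Longrightarrow> x \<in> V" "E x y \<Longrightarrow> y \<in> V" "E x y \<Longrightarrow> E y x" "\<not> E x x"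
  using assms unfolding simple_graph_def by blast+

lemma skew_forcing_set_delete_vertex:
  assumes "simple_graph V E" "no_isolated_vertices V E" "y \<in> V"
  shows "skew_forcing_set V E (V - {y})"
proof -
  obtain x where "E x y"
    using assms simple_graphD(4)[OF assms(1)] by blast
  then show ?thesis
    using simple_graphD[OF assms(1)] assms(3) skew_forcing_set_whole
    by (intro skew_forcing_set_force[of x V "{y}" E y]) (auto simp: nbhd_def)
qed

lemma skew_forcing_set_delete_edge:
  assumes "simple_graph V E" "no_isolated_vertices V E" "E x y"
  shows "skew_forcing_set V E (V - {x, y})"
proof -
  note G = simple_graphD[OF assms(1)]
  have "{x, y} - {x} = {y}" using assms(3) G(5) by blast
  then show ?thesis
    using G assms(3) skew_forcing_set_delete_vertex[OF assms(1,2)]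
    by (intro skew_forcing_set_force[of y V "{x, y}" E x]) (auto simp: nbhd_def)
qed

lemma skew_forcing_set_delete_pair_iff:
  assumes "simple_graph V E" "no_isolated_vertices V E"
    and small: "large_skew_forcing_sets V E"
    and "x \<in> V" "y \<in> V" "x \<noteq> y"
  shows "skew_forcing_set V E (V - {x, y}) \<longleftrightarrow> E x y"
proof
  note G = simple_graphD[OF assms(1)]
  assume forcing: "skew_forcing_set V E (V - {x, y})"
  show "E x y"
  proof (rule ccontr)
    assume "\<not> E x y"
    have "nbhd E x \<noteq> nbhd E y"
      using not_skew_forcing_set_twins[of E x y V] forcing G(4) assms(4-6) by blast
    then obtain a b z where ab: "{a, b} = {x, y}" "E a z" "\<not> E b z"
      unfolding nbhd_def by auto
    have "z \<noteq> a" "z \<noteq> b" "a \<noteq> b" "\<not> E a b" "a \<in> V" "b \<in> V"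
      using ab G(5) \<open>\<not> E x y\<close> G(4) assms(4-6) by (auto simp: doubleton_eq_iff)
    \<comment> \<open>\<open>a\<close> forces \<open>z\<close>, after which \<open>z\<close> forces \<open>a\<close>\<close>
    moreover have "{a, b, z} - {z} = {x, y}" using ab \<open>z \<noteq> a\<close> \<open>z \<noteq> b\<close> by blast
    ultimately have "skew_forcing_set V E (V - {a, b, z})"
      using ab G forcing by (intro skew_forcing_set_force[of a V "{a, b, z}" E z]) (auto simp: nbhd_def)
    then have "card (V - (V - {a, b, z})) \<le> 2" using small by blast
    moreover have "V - (V - {a, b, z}) = {a, b, z}" using ab G(3) \<open>a \<in> V\<close> \<open>b \<in> V\<close> by blast
    ultimately show False using \<open>z \<noteq> a\<close> \<open>z \<noteq> b\<close> \<open>a \<noteq> b\<close> by simp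
  qed
qed (rule skew_forcing_set_delete_edge[OF assms(1,2)])

lemma minimal_skew_forcing_set_card_Diff_ge_2:
  assumes "simple_graph V E" "no_isolated_vertices V E" "V \<noteq> {}"
    and "minimal_skew_forcing_set V E S"
  shows "2 \<le> card (V - S)"
proof (rule ccontr)
  note G = simple_graphD[OF assms(1)]
  have S: "skew_forcing_set V E S" "\<And>T. T \<subset> S \<Longrightarrow> \<not> skew_forcing_set V E T"
    using assms(4) unfolding minimal_skew_forcing_set_def by blast+
  assume "\<not> 2 \<le> card (V - S)"
  then have "card (V - S) \<le> 1" by simp
  then have same: "\<forall>a\<in>V - S. \<forall>b\<in>V - S. a = b" using G(1) by (simp add: card_le_Suc0_iff_eq)
  obtain y where y: "y \<in> V" "V - S \<subseteq> {y}"
  proof (cases "V - S = {}")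
    case True
    then show ?thesis using assms(3) that by blast
  next
    case False
    then obtain y where "y \<in> V - S" by blast
    then show ?thesis using same that by blast
  qed
  obtain x where x: "E y x" using assms(2) y(1) by blast
  then have "x \<noteq> y" "x \<in> V" using G by blast+
  then have "V - {y, x} \<subset> S"
    using y skew_forcing_set_subset[OF S(1)] by blast
  then show False using S(2) skew_forcing_set_delete_edge[OF assms(1,2) x] by blast
qed

lemma minimal_skew_forcing_set_if_card_Diff_2:
  assumes "finite V" "large_skew_forcing_sets V E"
    and "skew_forcing_set V E S" "card (V - S) = 2"
  shows "minimal_skew_forcing_set V E S"
  unfolding minimal_skew_forcing_set_def
proof (intro conjI allI impI notI)
  fix T assume "T \<subset> S" "skew_forcing_set V E T"
  then have "V - S \<subset> V - T" using skew_forcing_set_subset[OF assms(3)] by blast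
  then have "card (V - S) < card (V - T)" using assms(1) by (intro psubset_card_mono) auto
  then show False using assms(2,4) \<open>skew_forcing_set V E T\<close> by fastforce
qed (rule assms(3))

section \<open>The skew TAR graph\<close>

lemma TAR_adj_iff: "TAR_adj S T \<longleftrightarrow> (\<exists>s. T = sym_diff S {s})"
proof
  assume "TAR_adj S T"
  then obtain s where "sym_diff S T = {s}"
    unfolding TAR_adj_def by (auto simp: card_1_singleton_iff)
  then have "T = sym_diff S {s}" by blast
  then show "\<exists>s. T = sym_diff S {s}" ..
next
  assume "\<exists>s. T = sym_diff S {s}"
  then obtain s where "T = sym_diff S {s}" ..
  then have "sym_diff S T = {s}" by blast
  then show "TAR_adj S T" unfolding TAR_adj_def by simp
qed

lemma TAR_adj_sym: "TAR_adj S T \<longleftrightarrow> TAR_adj T S"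
  unfolding TAR_adj_def by (simp add: Un_commute)

lemma not_TAR_adj_self: "\<not> TAR_adj S S"
  by (simp add: TAR_adj_def)

lemma TAR_adj_Diff: "A \<subseteq> V \<Longrightarrow> B \<subseteq> V \<Longrightarrow> TAR_adj (V - A) (V - B) \<longleftrightarrow> TAR_adj A B"
  unfolding TAR_adj_def by (rule arg_cong[where f = "\<lambda>X. card X = 1"]) blast

lemma TAR_adj_delete: "s \<in> S \<Longrightarrow> TAR_adj S (S - {s})"
  unfolding TAR_adj_iff by (rule exI[of _ s]) blast

lemma TAR_adj_whole:
  assumes "TAR_adj V T" "T \<subseteq> V"
  shows "\<exists>s\<in>V. T = V - {s}"
proof -
  obtain s where "T = sym_diff V {s}" using assms(1) by (auto simp: TAR_adj_iff)
  then show ?thesis using assms(2) by blast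
qed

lemma TAR_adj_singleton_mem:
  assumes "TAR_adj A {a}" "A \<noteq> {}"
  shows "a \<in> A"
proof -
  obtain s where "A = sym_diff {a} {s}" using assms(1) by (auto simp: TAR_adj_iff TAR_adj_sym)
  then show ?thesis using assms(2) by (cases "s = a") auto
qed

lemma TAR_adj_two_singletons:
  assumes "finite A" "card A \<le> 2" "A \<noteq> {}" "TAR_adj A {a}" "TAR_adj A {b}" "a \<noteq> b"
  shows "A = {a, b}"
proof -
  have "{a, b} \<subseteq> A"
    using TAR_adj_singleton_mem[OF assms(4,3)] TAR_adj_singleton_mem[OF assms(5,3)] by simp
  moreover have "card A \<le> card {a, b}" using assms(2,6) by simp
  ultimately show ?thesis using card_seteq[OF assms(1)] by blast
qed

lemma not_TAR_adj_singletons: "\<not> TAR_adj {y} {z}"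
  by (cases "y = z") (auto simp: TAR_adj_def)

lemma skew_TAR_vertices_subset: "S \<in> skew_TAR_vertices V E \<Longrightarrow> S \<subseteq> V"
  unfolding skew_TAR_vertices_def by (simp add: skew_forcing_set_subset)

lemma skew_TAR_degree_Diff:
  assumes "A \<subseteq> V"
  shows "skew_TAR_degree V E (V - A) =
    card {s \<in> V. V - sym_diff A {s} \<in> skew_TAR_vertices V E}"
proof -
  let ?F = "skew_TAR_vertices V E" and ?nbr = "\<lambda>s. V - sym_diff A {s}"
  have "{T \<in> ?F. TAR_adj (V - A) T} = ?nbr ` {s \<in> V. ?nbr s \<in> ?F}"
  proof (intro equalityI subsetI)
    fix T assume T: "T \<in> {T \<in> ?F. TAR_adj (V - A) T}"
    then obtain s where s: "T = sym_diff (V - A) {s}" by (auto simp: TAR_adj_iff)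
    moreover have "T \<subseteq> V" using T skew_TAR_vertices_subset by blast
    ultimately have "s \<in> V" by blast
    moreover have "T = ?nbr s" using s \<open>s \<in> V\<close> assms by blast
    ultimately show "T \<in> ?nbr ` {s \<in> V. ?nbr s \<in> ?F}" using T by blast
  next
    fix T assume "T \<in> ?nbr ` {s \<in> V. ?nbr s \<in> ?F}"
    then obtain s where "s \<in> V" "T = ?nbr s" "T \<in> ?F" by blast
    moreover have "?nbr s = sym_diff (V - A) {s}" using \<open>s \<in> V\<close> assms by blast
    ultimately show "T \<in> {T \<in> ?F. TAR_adj (V - A) T}" by (auto simp: TAR_adj_iff)
  qed
  moreover have "inj_on ?nbr V"
  proof (rule inj_onI)
    fix s s' assume "s \<in> V" "s' \<in> V" "?nbr s = ?nbr s'"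
    then have "sym_diff A {s} = sym_diff A {s'}" using assms by blast
    then show "s = s'" by blast
  qed
  ultimately show ?thesis
    unfolding skew_TAR_degree_def by (metis (no_types, lifting) card_image inj_on_subset mem_Collect_eq subsetI)
qed

lemma skew_TAR_degree_le_card:
  assumes "finite V" "S \<subseteq> V"
  shows "skew_TAR_degree V E S \<le> card V"
proof -
  have "skew_TAR_degree V E S = skew_TAR_degree V E (V - (V - S))"
    using assms(2) by (simp add: double_diff)
  also have "\<dots> \<le> card V"
    unfolding skew_TAR_degree_Diff[OF Diff_subset] using assms(1) by (intro card_mono) auto
  finally show ?thesis .
qed

lemma skew_TAR_degree_whole:
  assumes "simple_graph V E" "no_isolated_vertices V E"
  shows "skew_TAR_degree V E V = card V"
proof -
  have "{s \<in> V. V - sym_diff {} {s} \<in> skew_TAR_vertices V E} = V"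
    using skew_forcing_set_delete_vertex[OF assms] by (auto simp: skew_TAR_vertices_def)
  then show ?thesis using skew_TAR_degree_Diff[of "{}" V E] by simp
qed

lemma skew_TAR_degree_ge_3:
  assumes "finite V" "skew_forcing_set V E S" "{a, b, c} \<subseteq> V - S" "distinct [a, b, c]"
    and "A \<subseteq> {a, b, c}"
  shows "3 \<le> skew_TAR_degree V E (V - A)"
proof -
  have "V - sym_diff A {s} \<in> skew_TAR_vertices V E" if "s \<in> {a, b, c}" for s
  proof -
    have "sym_diff A {s} \<subseteq> {a, b, c}" using assms(5) that by blast
    then have "S \<subseteq> V - sym_diff A {s}"
      using assms(3) skew_forcing_set_subset[OF assms(2)] by blast
    then show ?thesis
      using skew_forcing_set_mono[OF assms(2)] unfolding skew_TAR_vertices_def by blast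
  qed
  then have "{a, b, c} \<subseteq> {s \<in> V. V - sym_diff A {s} \<in> skew_TAR_vertices V E}"
    using assms(3) by blast
  then have "card {a, b, c} \<le> skew_TAR_degree V E (V - A)"
    using assms(1,3,5) by (subst skew_TAR_degree_Diff) (auto intro: card_mono)
  then show ?thesis using assms(4) by simp
qed

lemma skew_TAR_high_degree_path:
  assumes "finite V" "skew_forcing_set V E S" "3 \<le> card (V - S)"
  obtains P1 P2 P3 P4
  where "\<forall>P\<in>{P1, P2, P3, P4}. P \<in> skew_TAR_vertices V E \<and> 3 \<le> skew_TAR_degree V E P"
    and "TAR_adj P1 P2" "TAR_adj P2 P3" "TAR_adj P3 P4" "P1 \<noteq> P3" "P2 \<noteq> P4"
proof -
  obtain T where T: "T \<subseteq> V - S" "card T = 3" using assms(3) by (rule obtain_subset_with_card_n)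
  then obtain a b c where abc_eq: "T = {a, b, c}" "a \<noteq> b" "b \<noteq> c" "a \<noteq> c"
    unfolding card_3_iff by blast
  have abc: "{a, b, c} \<subseteq> V - S" "distinct [a, b, c]" using T(1) abc_eq by simp_all
  have high: "V - A \<in> skew_TAR_vertices V E \<and> 3 \<le> skew_TAR_degree V E (V - A)"
    if "A \<subseteq> {a, b, c}" for A
  proof -
    have "S \<subseteq> V - A" using abc(1) that skew_forcing_set_subset[OF assms(2)] by blast
    then have "skew_forcing_set V E (V - A)" using skew_forcing_set_mono[OF assms(2)] by blast
    then show ?thesis
      using skew_TAR_degree_ge_3[OF assms(1,2) abc that] by (simp add: skew_TAR_vertices_def)
  qed
  have "V - {a, b, c} = (V - {a, c}) - {b}" "V - {a, b, c} = (V - {a, b}) - {c}"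
    "V - {a, b} = (V - {a}) - {b}" "b \<in> V - {a, c}" "c \<in> V - {a, b}" "b \<in> V - {a}"
    using abc by auto
  then have "TAR_adj (V - {a, c}) (V - {a, b, c})" "TAR_adj (V - {a, b, c}) (V - {a, b})"
    "TAR_adj (V - {a, b}) (V - {a})"
    using TAR_adj_delete TAR_adj_sym by metis+
  moreover have "V - {a, c} \<noteq> V - {a, b}" "V - {a, b, c} \<noteq> V - {a}" using abc by auto
  moreover have "\<forall>P\<in>{V - {a, c}, V - {a, b, c}, V - {a, b}, V - {a}}.
      P \<in> skew_TAR_vertices V E \<and> 3 \<le> skew_TAR_degree V E P"
    using high by simp
  ultimately show thesis using that[of "V - {a, c}" "V - {a, b, c}" "V - {a, b}" "V - {a}"] by blast
qed

lemma skew_TAR_degree_le_2: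
  assumes "finite V" "large_skew_forcing_sets V E"
    and "A \<subseteq> V" "card A = 2"
  shows "skew_TAR_degree V E (V - A) \<le> 2"
proof -
  have "s \<in> A" if "s \<in> V" "V - sym_diff A {s} \<in> skew_TAR_vertices V E" for s
  proof (rule ccontr)
    assume "s \<notin> A"
    then have "V - (V - sym_diff A {s}) = insert s A" using that(1) assms(3) by blast
    moreover have "card (insert s A) = 3"
      using \<open>s \<notin> A\<close> assms(4) finite_subset[OF assms(3,1)] by simp
    ultimately show False using assms(2) that(2) unfolding skew_TAR_vertices_def by fastforce
  qed
  then have "skew_TAR_degree V E (V - A) \<le> card A"
    using finite_subset[OF assms(3,1)] by (subst skew_TAR_degree_Diff[OF assms(3)]) (auto intro: card_mono)
  then show ?thesis using assms(4) by simp
qed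

lemma skew_TAR_degree_le_2_second_neighbour:
  assumes "finite V" "large_skew_forcing_sets V E"
    and "R1 \<in> skew_TAR_vertices V E" "R2 \<in> skew_TAR_vertices V E"
    and "TAR_adj V R1" "TAR_adj R1 R2" "R2 \<noteq> V"
  shows "skew_TAR_degree V E R2 \<le> 2"
proof -
  obtain y where y: "y \<in> V" "R1 = V - {y}"
    using TAR_adj_whole[OF assms(5) skew_TAR_vertices_subset[OF assms(3)]] by blast
  obtain s where s: "R2 = sym_diff R1 {s}" using assms(6) by (auto simp: TAR_adj_iff)
  have "s \<noteq> y" using s y assms(7) by auto
  moreover have "s \<in> V" using s y skew_TAR_vertices_subset[OF assms(4)] \<open>s \<noteq> y\<close> by blast
  ultimately have "R2 = V - {y, s}" "card {y, s} = 2" using s y by auto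
  then show ?thesis using skew_TAR_degree_le_2[OF assms(1,2)] y(1) \<open>s \<in> V\<close> by simp
qed

section \<open>Isomorphisms of skew TAR graphs\<close>

definition graph_isomorphism ::
    "('a \<Rightarrow> 'b) \<Rightarrow> 'a set \<Rightarrow> ('a \<Rightarrow> 'a \<Rightarrow> bool) \<Rightarrow> 'b set \<Rightarrow> ('b \<Rightarrow> 'b \<Rightarrow> bool) \<Rightarrow> bool" where
  "graph_isomorphism f V E V' E' \<longleftrightarrow>
     bij_betw f V V' \<and> (\<forall>x\<in>V. \<forall>y\<in>V. E x y \<longleftrightarrow> E' (f x) (f y))"

abbreviation skew_TAR_isomorphism ::
    "('a set \<Rightarrow> 'b set) \<Rightarrow> 'a set \<Rightarrow> ('a \<Rightarrow> 'a \<Rightarrow> bool) \<Rightarrow> 'b set \<Rightarrow> ('b \<Rightarrow> 'b \<Rightarrow> bool) \<Rightarrow> bool" where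
  "skew_TAR_isomorphism \<phi> V E V' E' \<equiv>
     graph_isomorphism \<phi> (skew_TAR_vertices V E) TAR_adj (skew_TAR_vertices V' E') TAR_adj"

lemma graph_iso_iff_isomorphism: "graph_iso V E V' E' \<longleftrightarrow> (\<exists>f. graph_isomorphism f V E V' E')"
  unfolding graph_iso_def graph_isomorphism_def ..

lemma graph_isomorphismD:
  assumes "graph_isomorphism f V E V' E'"
  shows "x \<in> V \<Longrightarrow> f x \<in> V'" "inj_on f V" "f ` V = V'"
    "x \<in> V \<Longrightarrow> y \<in> V \<Longrightarrow> E' (f x) (f y) \<longleftrightarrow> E x y"
  using assms unfolding graph_isomorphism_def bij_betw_def by auto

lemma graph_isomorphism_inv:
  assumes "graph_isomorphism f V E V' E'"
  shows "graph_isomorphism (inv_into V f) V' E' V E"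
proof -
  have bij: "bij_betw f V V'" using assms unfolding graph_isomorphism_def by blast
  have "E' x y \<longleftrightarrow> E (inv_into V f x) (inv_into V f y)" if "x \<in> V'" "y \<in> V'" for x y
    using that graph_isomorphismD(4)[OF assms, of "inv_into V f x" "inv_into V f y"]
      bij_betw_inv_into_right[OF bij] bij_betw_apply[OF bij_betw_inv_into[OF bij]]
    by simp
  then show ?thesis unfolding graph_isomorphism_def using bij_betw_inv_into[OF bij] by blast
qed

lemma graph_isomorphism_comp:
  assumes "graph_isomorphism f V E V' E'" "graph_isomorphism g V' E' V'' E''"
  shows "graph_isomorphism (g \<circ> f) V E V'' E''"
  unfolding graph_isomorphism_def
proof
  show "bij_betw (g \<circ> f) V V''"
    using assms bij_betw_trans unfolding graph_isomorphism_def by blast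
  show "\<forall>x\<in>V. \<forall>y\<in>V. E x y \<longleftrightarrow> E'' ((g \<circ> f) x) ((g \<circ> f) y)"
    using graph_isomorphismD(1,4)[OF assms(1)] graph_isomorphismD(4)[OF assms(2)] by simp
qed

lemma graph_isomorphism_card_nbrs:
  assumes "graph_isomorphism f V E V' E'" "x \<in> V"
  shows "card {y \<in> V'. E' (f x) y} = card {y \<in> V. E x y}"
proof -
  have "{y \<in> V'. E' (f x) y} = f ` {y \<in> V. E x y}"
    using graph_isomorphismD[OF assms(1)] assms(2) by auto
  moreover have "inj_on f {y \<in> V. E x y}"
    using graph_isomorphismD(2)[OF assms(1)] by (rule inj_on_subset) auto
  ultimately show ?thesis by (simp add: card_image)
qed

lemma skew_TAR_isomorphism_degree:
  assumes "skew_TAR_isomorphism \<phi> V E V' E'" "S \<in> skew_TAR_vertices V E"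
  shows "skew_TAR_degree V' E' (\<phi> S) = skew_TAR_degree V E S"
  unfolding skew_TAR_degree_def by (rule graph_isomorphism_card_nbrs[OF assms])

lemma skew_TAR_isomorphism_card_le:
  assumes "simple_graph V E" "no_isolated_vertices V E" "finite V'"
    and "skew_TAR_isomorphism \<phi> V E V' E'"
  shows "card V \<le> card V'"
proof -
  have whole: "V \<in> skew_TAR_vertices V E"
    by (simp add: skew_TAR_vertices_def skew_forcing_set_whole)
  have "card V = skew_TAR_degree V' E' (\<phi> V)"
    using skew_TAR_degree_whole[OF assms(1,2)] skew_TAR_isomorphism_degree[OF assms(4) whole] by simp
  also have "\<dots> \<le> card V'"
    by (rule skew_TAR_degree_le_card[OF assms(3)
          skew_TAR_vertices_subset[OF graph_isomorphismD(1)[OF assms(4) whole]]])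
  finally show ?thesis .
qed

lemma skew_TAR_isomorphism_card_eq:
  assumes "simple_graph V E" "no_isolated_vertices V E" "simple_graph V' E'" "no_isolated_vertices V' E'"
    and "skew_TAR_isomorphism \<phi> V E V' E'"
  shows "card V = card V'"
  using skew_TAR_isomorphism_card_le[OF assms(1,2) simple_graphD(1)[OF assms(3)] assms(5)]
    skew_TAR_isomorphism_card_le[OF assms(3,4) simple_graphD(1)[OF assms(1)]
      graph_isomorphism_inv[OF assms(5)]]
  by simp

lemma skew_TAR_isomorphism_sym_diff:
  assumes "\<forall>S\<in>skew_TAR_vertices V E. sym_diff S C \<in> skew_TAR_vertices V E"
  shows "skew_TAR_isomorphism (\<lambda>S. sym_diff S C) V E V E"
  unfolding graph_isomorphism_def
proof
  have "sym_diff (sym_diff S C) C = S" for S :: "'a set" by blast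
  then show "bij_betw (\<lambda>S. sym_diff S C) (skew_TAR_vertices V E) (skew_TAR_vertices V E)"
    using assms by (intro bij_betw_byWitness[where f' = "\<lambda>S. sym_diff S C"]) auto
  have "sym_diff (sym_diff S C) (sym_diff T C) = sym_diff S T" for S T :: "'a set" by blast
  then show "\<forall>S\<in>skew_TAR_vertices V E. \<forall>T\<in>skew_TAR_vertices V E.
      TAR_adj S T \<longleftrightarrow> TAR_adj (sym_diff S C) (sym_diff T C)"
    unfolding TAR_adj_def by simp
qed

lemma skew_TAR_isomorphism_whole_to_delete_vertex:
  assumes "finite V" "large_skew_forcing_sets V E"
    and "simple_graph W D" "no_isolated_vertices W D"
    and iso: "skew_TAR_isomorphism \<phi> V E W D"
    and "y0 \<in> W" "\<phi> V = W - {y0}" "z \<in> W" "z \<noteq> y0"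
  shows "skew_TAR_degree W D (W - {z}) \<le> 2"
proof -
  let ?F = "skew_TAR_vertices V E" and ?H = "skew_TAR_vertices W D"
  note \<phi> = graph_isomorphismD[OF iso]
  have whole: "V \<in> ?F" "W \<in> ?H" by (simp_all add: skew_TAR_vertices_def skew_forcing_set_whole)
  have "W - {z} \<in> ?H"
    using skew_forcing_set_delete_vertex[OF assms(3,4,8)] by (simp add: skew_TAR_vertices_def)
  then obtain R1 R2 where R: "R1 \<in> ?F" "\<phi> R1 = W" "R2 \<in> ?F" "\<phi> R2 = W - {z}"
    using whole(2) \<phi>(3) by (metis imageE)
  have "TAR_adj (\<phi> V) (\<phi> R1)" "TAR_adj (\<phi> R1) (\<phi> R2)"
    using TAR_adj_delete[of y0 W] TAR_adj_delete[of z W] assms(6-8) R TAR_adj_sym by auto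
  then have "TAR_adj V R1" "TAR_adj R1 R2" using \<phi>(4) whole(1) R(1,3) by auto
  moreover have "R2 \<noteq> V" using R(4) assms(6-9) by auto
  ultimately have "skew_TAR_degree V E R2 \<le> 2"
    using skew_TAR_degree_le_2_second_neighbour[OF assms(1,2) R(1,3)] by blast
  then show ?thesis using skew_TAR_isomorphism_degree[OF iso R(3)] R(4) by simp
qed

lemma skew_TAR_isomorphism_delete_pair:
  assumes iso: "skew_TAR_isomorphism \<phi> V E W D"
    and "finite W" "large_skew_forcing_sets W D"
    and "\<phi> V = W" "\<phi> (V - {x}) = W - {a}" "\<phi> (V - {y}) = W - {b}" "a \<in> W" "b \<in> W" "a \<noteq> b"
    and "x \<in> V" "y \<in> V" "x \<noteq> y" "V - {x, y} \<in> skew_TAR_vertices V E"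
  shows "\<phi> (V - {x, y}) = W - {a, b}"
proof -
  let ?F = "skew_TAR_vertices V E" and ?H = "skew_TAR_vertices W D"
  note \<phi> = graph_isomorphismD[OF iso]
  have pair: "V - {x, y} \<in> ?F" by fact
  have "skew_forcing_set V E (V - {x, y})" using pair by (simp add: skew_TAR_vertices_def)
  note mono = skew_forcing_set_mono[OF this]
  have in_F: "V \<in> ?F" "V - {x} \<in> ?F" "V - {y} \<in> ?F"
    unfolding skew_TAR_vertices_def mem_Collect_eq by (auto intro!: mono)
  define A where "A = W - \<phi> (V - {x, y})"
  have Q: "\<phi> (V - {x, y}) = W - A" "A \<subseteq> W"
    unfolding A_def using skew_TAR_vertices_subset[OF \<phi>(1)[OF pair]] by blast+
  have "skew_forcing_set W D (W - A)" using \<phi>(1)[OF pair] Q(1) by (simp add: skew_TAR_vertices_def)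
  moreover have "W - (W - A) = A" using Q(2) by blast
  ultimately have "card A \<le> 2" using assms(3) by metis
  have "A \<noteq> {}"
  proof
    assume "A = {}"
    then have "\<phi> (V - {x, y}) = \<phi> V" using Q(1) assms(4) by simp
    then have "V - {x, y} = V" using inj_onD[OF \<phi>(2) _ pair in_F(1)] by blast
    then show False using assms(10) by blast
  qed
  have "y \<in> V - {x}" "x \<in> V - {y}" "V - {x} - {y} = V - {x, y}" "V - {y} - {x} = V - {x, y}"
    using assms(10-12) by blast+
  then have "TAR_adj (V - {x}) (V - {x, y})" "TAR_adj (V - {y}) (V - {x, y})"
    using TAR_adj_delete by metis+
  then have "TAR_adj (\<phi> (V - {x, y})) (\<phi> (V - {x}))" "TAR_adj (\<phi> (V - {x, y})) (\<phi> (V - {y}))"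
    using \<phi>(4)[OF pair in_F(2)] \<phi>(4)[OF pair in_F(3)] TAR_adj_sym by blast+
  then have "TAR_adj (W - A) (W - {a})" "TAR_adj (W - A) (W - {b})"
    unfolding Q(1) assms(5,6) .
  then have "TAR_adj A {a}" "TAR_adj A {b}"
    using TAR_adj_Diff[OF Q(2), of "{a}"] TAR_adj_Diff[OF Q(2), of "{b}"] assms(7,8) by simp_all
  then have "A = {a, b}"
    using TAR_adj_two_singletons[OF finite_subset[OF Q(2) assms(2)] \<open>card A \<le> 2\<close> \<open>A \<noteq> {}\<close>]
      assms(9) by blast
  then show ?thesis using Q(1) by simp
qed

lemma skew_TAR_isomorphism_whole_vertex_map:
  assumes "simple_graph V E" "no_isolated_vertices V E" "simple_graph W D" "no_isolated_vertices W D"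
    and iso: "skew_TAR_isomorphism \<phi> V E W D" and whole: "\<phi> V = W"
  obtains f where "bij_betw f V W" "\<forall>x\<in>V. \<phi> (V - {x}) = W - {f x}"
proof -
  let ?F = "skew_TAR_vertices V E"
  note \<phi> = graph_isomorphismD[OF iso]
  have whole_F: "V \<in> ?F" by (simp add: skew_TAR_vertices_def skew_forcing_set_whole)
  have single: "V - {x} \<in> ?F" if "x \<in> V" for x
    using skew_forcing_set_delete_vertex[OF assms(1,2) that] by (simp add: skew_TAR_vertices_def)
  have "\<exists>a\<in>W. \<phi> (V - {x}) = W - {a}" if "x \<in> V" for x
  proof -
    have "TAR_adj V (V - {x})" using TAR_adj_delete[OF that] .
    then have "TAR_adj W (\<phi> (V - {x}))" using \<phi>(4)[OF whole_F single[OF that]] whole by simp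
    then show ?thesis by (rule TAR_adj_whole[OF _ skew_TAR_vertices_subset[OF \<phi>(1)[OF single[OF that]]]])
  qed
  then have "\<forall>x\<in>V. \<exists>a. a \<in> W \<and> \<phi> (V - {x}) = W - {a}" by blast
  from bchoice[OF this] obtain f where f: "\<forall>x\<in>V. f x \<in> W \<and> \<phi> (V - {x}) = W - {f x}" ..
  have inj: "inj_on f V"
  proof (rule inj_onI)
    fix x y assume xy: "x \<in> V" "y \<in> V" "f x = f y"
    then have "\<phi> (V - {x}) = \<phi> (V - {y})" using f by simp
    then have "V - {x} = V - {y}" using inj_onD[OF \<phi>(2) _ single single] xy(1,2) by blast
    then show "x = y" using xy(1) by blast
  qed
  have "card (f ` V) = card W"
    using card_image[OF inj] skew_TAR_isomorphism_card_eq[OF assms(1-4) iso] by simp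
  then have "f ` V = W"
    using f card_subset_eq[OF simple_graphD(1)[OF assms(3)], of "f ` V"] by blast
  then show thesis using that inj f unfolding bij_betw_def by blast
qed

lemma skew_TAR_isomorphism_delete_pair_iff:
  assumes G: "simple_graph V E" "no_isolated_vertices V E" "large_skew_forcing_sets V E"
    and H: "simple_graph W D" "large_skew_forcing_sets W D"
    and iso: "skew_TAR_isomorphism \<phi> V E W D" and whole: "\<phi> V = W"
    and f: "bij_betw f V W" "\<forall>x\<in>V. \<phi> (V - {x}) = W - {f x}"
    and xy: "x \<in> V" "y \<in> V" "x \<noteq> y"
  shows "V - {x, y} \<in> skew_TAR_vertices V E \<longleftrightarrow> W - {f x, f y} \<in> skew_TAR_vertices W D"
proof -
  have fxy: "f x \<in> W" "f y \<in> W" "f x \<noteq> f y"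
    using bij_betw_apply[OF f(1)] inj_onD[OF bij_betw_imp_inj_on[OF f(1)] _ xy(1,2)] xy by blast+
  show ?thesis
  proof
    assume pair: "V - {x, y} \<in> skew_TAR_vertices V E"
    have "\<phi> (V - {x, y}) = W - {f x, f y}"
      using f(2) xy fxy pair
      by (intro skew_TAR_isomorphism_delete_pair[OF iso simple_graphD(1)[OF H(1)] H(2) whole]) auto
    then show "W - {f x, f y} \<in> skew_TAR_vertices W D" using graph_isomorphismD(1)[OF iso pair] by simp
  next
    assume pair: "W - {f x, f y} \<in> skew_TAR_vertices W D"
    define \<psi> where "\<psi> = inv_into (skew_TAR_vertices V E) \<phi>"
    have \<psi>: "skew_TAR_isomorphism \<psi> W D V E"
      unfolding \<psi>_def by (rule graph_isomorphism_inv[OF iso])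
    have \<psi>_\<phi>: "\<psi> (\<phi> S) = S" if "S \<in> skew_TAR_vertices V E" for S
      unfolding \<psi>_def using inv_into_f_f[OF graph_isomorphismD(2)[OF iso] that] .
    have F: "V \<in> skew_TAR_vertices V E" "V - {x} \<in> skew_TAR_vertices V E" "V - {y} \<in> skew_TAR_vertices V E"
      using skew_forcing_set_whole skew_forcing_set_delete_vertex[OF G(1,2)] xy(1,2)
      by (simp_all add: skew_TAR_vertices_def)
    have "\<psi> W = V" "\<psi> (W - {f x}) = V - {x}" "\<psi> (W - {f y}) = V - {y}"
      using \<psi>_\<phi>[OF F(1)] \<psi>_\<phi>[OF F(2)] \<psi>_\<phi>[OF F(3)] f(2) xy(1,2) whole by simp_all
    then have "\<psi> (W - {f x, f y}) = V - {x, y}"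
      using xy fxy pair by (intro skew_TAR_isomorphism_delete_pair[OF \<psi> simple_graphD(1)[OF G(1)] G(3)]) auto
    then show "V - {x, y} \<in> skew_TAR_vertices V E" using graph_isomorphismD(1)[OF \<psi> pair] by simp
  qed
qed

lemma skew_TAR_isomorphism_whole_imp_graph_iso:
  assumes G: "simple_graph V E" "no_isolated_vertices V E" "large_skew_forcing_sets V E"
    and H: "simple_graph W D" "no_isolated_vertices W D" "large_skew_forcing_sets W D"
    and iso: "skew_TAR_isomorphism \<phi> V E W D" and whole: "\<phi> V = W"
  shows "graph_iso V E W D"
proof -
  obtain f where f: "bij_betw f V W" "\<forall>x\<in>V. \<phi> (V - {x}) = W - {f x}"
    using skew_TAR_isomorphism_whole_vertex_map[OF G(1,2) H(1,2) iso whole] by blast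
  have "E x y \<longleftrightarrow> D (f x) (f y)" if xy: "x \<in> V" "y \<in> V" "x \<noteq> y" for x y
  proof -
    have fxy: "f x \<in> W" "f y \<in> W" "f x \<noteq> f y"
      using bij_betw_apply[OF f(1)] inj_onD[OF bij_betw_imp_inj_on[OF f(1)] _ xy(1,2)] xy by blast+
    have "E x y \<longleftrightarrow> V - {x, y} \<in> skew_TAR_vertices V E"
      using skew_forcing_set_delete_pair_iff[OF G xy] by (simp add: skew_TAR_vertices_def)
    also have "\<dots> \<longleftrightarrow> W - {f x, f y} \<in> skew_TAR_vertices W D"
      by (rule skew_TAR_isomorphism_delete_pair_iff[OF G H(1,3) iso whole f xy])
    also have "\<dots> \<longleftrightarrow> D (f x) (f y)"
      using skew_forcing_set_delete_pair_iff[OF H fxy] by (simp add: skew_TAR_vertices_def)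
    finally show ?thesis .
  qed
  then have "E x y \<longleftrightarrow> D (f x) (f y)" if "x \<in> V" "y \<in> V" for x y
    using that simple_graphD(5)[OF G(1)] simple_graphD(5)[OF H(1)] by (cases "x = y") auto
  then show ?thesis unfolding graph_iso_iff_isomorphism graph_isomorphism_def using f(1) by blast
qed

section \<open>Complete multipartite graphs\<close>

lemma cmp_V_eq_Sigma: "cmp_V t ns = Sigma {..<t} (\<lambda>i. {..<ns i})"
  unfolding cmp_V_def by auto

lemma cmp_V_finite: "finite (cmp_V t ns)"
  by (simp add: cmp_V_eq_Sigma)

lemma cmp_V_card: "card (cmp_V t ns) = (\<Sum>i<t. ns i)"
  by (simp add: cmp_V_eq_Sigma card_SigmaI)

lemma cmp_part_card: "i < t \<Longrightarrow> card {w \<in> cmp_V t ns. fst w = i} = ns i"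
proof -
  assume "i < t"
  then have "{w \<in> cmp_V t ns. fst w = i} = Pair i ` {..<ns i}" unfolding cmp_V_def by auto
  then show ?thesis by (simp add: card_image inj_on_def)
qed

lemma cmp_simple_graph: "simple_graph (cmp_V t ns) (cmp_E t ns)"
  unfolding simple_graph_def cmp_E_def by (auto simp: cmp_V_finite)

lemma cmp_nbhd: "u \<in> cmp_V t ns \<Longrightarrow> z \<in> nbhd (cmp_E t ns) u \<longleftrightarrow> z \<in> cmp_V t ns \<and> fst z \<noteq> fst u"
  unfolding nbhd_def cmp_E_def by auto

abbreviation small_transversal :: "(nat \<times> nat) set \<Rightarrow> bool" where
  "small_transversal A \<equiv> card A \<le> 2 \<and> inj_on fst A"

locale complete_multipartite =
  fixes t :: nat and ns :: "nat \<Rightarrow> nat"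
  assumes two_parts: "t \<ge> 2" and parts_nonempty: "\<forall>i<t. ns i \<ge> 1"
begin

lemma cmp_no_isolated_vertices: "no_isolated_vertices (cmp_V t ns) (cmp_E t ns)"
proof
  fix x assume x: "x \<in> cmp_V t ns"
  define i where "i = (if fst x = 0 then 1 else (0::nat))"
  have "i < t" "i \<noteq> fst x" unfolding i_def using two_parts by auto
  moreover from this(1) have "0 < ns i" using parts_nonempty by auto
  ultimately have "cmp_E t ns x (i, 0)" using x unfolding cmp_E_def by (simp add: cmp_V_def)
  then show "\<exists>y. cmp_E t ns x y" ..
qed

lemma two_le_card: "2 \<le> card (cmp_V t ns)"
proof -
  have "1 \<le> ns 0" "1 \<le> ns 1" using two_parts parts_nonempty by auto
  then have "{(0, 0), (1, 0)} \<subseteq> cmp_V t ns" using two_parts unfolding cmp_V_def by auto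
  from card_mono[OF cmp_V_finite this] show ?thesis by simp
qed

lemma skew_step_reflects_small_transversal:
  assumes "skew_step (cmp_V t ns) (cmp_E t ns) B B'" "small_transversal (cmp_V t ns - B')"
  shows "small_transversal (cmp_V t ns - B)"
proof -
  define W where "W = cmp_V t ns - B"
  obtain u w where u: "u \<in> cmp_V t ns" and w: "w \<in> W"
    and nb: "nbhd (cmp_E t ns) u \<inter> W = {w}" and B': "B' = insert w B"
    using assms(1) unfolding skew_step_def W_def by blast
  have W': "cmp_V t ns - B' = W - {w}" unfolding W_def B' by blast
  then have inj: "inj_on fst (W - {w})" using assms(2) by simp
  have same_part: "fst z = fst u" if "z \<in> W - {w}" for z
    using that nb cmp_nbhd[OF u] unfolding W_def by blast
  have "fst w \<noteq> fst u" using nb cmp_nbhd[OF u] by blast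
  have "finite W" unfolding W_def using cmp_V_finite by blast
  have "\<forall>a\<in>W - {w}. \<forall>b\<in>W - {w}. a = b"
    using inj same_part unfolding inj_on_def by metis
  then have "card (W - {w}) \<le> 1" using \<open>finite W\<close> by (simp add: card_le_Suc0_iff_eq)
  then have "card W \<le> 2" using w \<open>finite W\<close> by (simp add: card_Diff_singleton_if)
  moreover have "inj_on fst W"
  proof -
    have "fst w \<notin> fst ` (W - {w})" using same_part \<open>fst w \<noteq> fst u\<close> by auto
    then have "inj_on fst (insert w (W - {w}))"
      unfolding inj_on_insert using inj by simp
    then show ?thesis using w by (simp add: insert_absorb)
  qed
  ultimately show ?thesis unfolding W_def ..
qed

lemma skew_forcing_set_iff:
  "skew_forcing_set (cmp_V t ns) (cmp_E t ns) S \<longleftrightarrow>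
     S \<subseteq> cmp_V t ns \<and> small_transversal (cmp_V t ns - S)"
proof
  assume "skew_forcing_set (cmp_V t ns) (cmp_E t ns) S"
  then have "S \<subseteq> cmp_V t ns" "(skew_step (cmp_V t ns) (cmp_E t ns))\<^sup>*\<^sup>* S (cmp_V t ns)"
    unfolding skew_forcing_set_def by blast+
  moreover from this(2) have "small_transversal (cmp_V t ns - S)"
    by (induction rule: converse_rtranclp_induct) (simp, use skew_step_reflects_small_transversal in blast)
  ultimately show "S \<subseteq> cmp_V t ns \<and> small_transversal (cmp_V t ns - S)"
    by blast
next
  note G = cmp_simple_graph cmp_no_isolated_vertices
  assume S: "S \<subseteq> cmp_V t ns \<and> small_transversal (cmp_V t ns - S)"
  then have S_eq: "S = cmp_V t ns - (cmp_V t ns - S)" by blast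
  have "finite (cmp_V t ns - S)" using cmp_V_finite by blast
  then show "skew_forcing_set (cmp_V t ns) (cmp_E t ns) S"
  proof (rule card_le_2_cases)
    show "card (cmp_V t ns - S) \<le> 2" using S by blast
  next
    assume "cmp_V t ns - S = {}"
    then have "S = cmp_V t ns" using S by blast
    then show ?thesis using skew_forcing_set_whole by simp
  next
    fix y assume y: "cmp_V t ns - S = {y}"
    then have "y \<in> cmp_V t ns" by blast
    then show ?thesis using S_eq y skew_forcing_set_delete_vertex[OF G] by simp
  next
    fix u v assume uv: "cmp_V t ns - S = {u, v}" "u \<noteq> v"
    then have "inj_on fst {u, v}" using S by simp
    then have "fst u \<noteq> fst v" using uv(2) by (auto dest: inj_onD)
    moreover have "u \<in> cmp_V t ns" "v \<in> cmp_V t ns" using uv by blast+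
    ultimately have "cmp_E t ns u v" unfolding cmp_E_def by simp
    then show ?thesis using S_eq uv skew_forcing_set_delete_edge[OF G] by simp
  qed
qed

lemma cmp_large_skew_forcing_sets: "large_skew_forcing_sets (cmp_V t ns) (cmp_E t ns)"
  by (simp add: skew_forcing_set_iff)

lemma Diff_in_skew_TAR_vertices_iff:
  assumes "A \<subseteq> cmp_V t ns"
  shows "cmp_V t ns - A \<in> skew_TAR_vertices (cmp_V t ns) (cmp_E t ns) \<longleftrightarrow>
    small_transversal A"
proof -
  have "cmp_V t ns - (cmp_V t ns - A) = A" using assms by blast
  then show ?thesis unfolding skew_TAR_vertices_def by (simp add: skew_forcing_set_iff)
qed

lemma small_transversal_card_2_iff:
  assumes "W \<subseteq> cmp_V t ns"
  shows "card W = 2 \<and> inj_on fst W \<longleftrightarrow>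
    (\<exists>u\<in>cmp_V t ns. \<exists>v\<in>cmp_V t ns. fst u \<noteq> fst v \<and> W = {u, v})"
proof
  assume "card W = 2 \<and> inj_on fst W"
  then obtain u v where "W = {u, v}" "u \<noteq> v" "inj_on fst {u, v}" by (auto simp: card_2_iff)
  moreover from this(2,3) have "fst u \<noteq> fst v" by (auto dest: inj_onD)
  ultimately show "\<exists>u\<in>cmp_V t ns. \<exists>v\<in>cmp_V t ns. fst u \<noteq> fst v \<and> W = {u, v}"
    using assms by blast
next
  assume "\<exists>u\<in>cmp_V t ns. \<exists>v\<in>cmp_V t ns. fst u \<noteq> fst v \<and> W = {u, v}"
  then obtain u v where "fst u \<noteq> fst v" "W = {u, v}" by blast
  then show "card W = 2 \<and> inj_on fst W" by (cases "u = v") auto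
qed

lemma minimal_skew_forcing_set_iff:
  "minimal_skew_forcing_set (cmp_V t ns) (cmp_E t ns) S \<longleftrightarrow>
    (\<exists>u\<in>cmp_V t ns. \<exists>v\<in>cmp_V t ns. fst u \<noteq> fst v \<and> S = cmp_V t ns - {u, v})"
proof
  assume min: "minimal_skew_forcing_set (cmp_V t ns) (cmp_E t ns) S"
  then have S: "S \<subseteq> cmp_V t ns" "card (cmp_V t ns - S) \<le> 2" "inj_on fst (cmp_V t ns - S)"
    unfolding minimal_skew_forcing_set_def skew_forcing_set_iff by blast+
  have "cmp_V t ns \<noteq> {}" using two_le_card by auto
  then have "card (cmp_V t ns - S) = 2"
    using S(2) minimal_skew_forcing_set_card_Diff_ge_2[OF cmp_simple_graph cmp_no_isolated_vertices _ min] by simp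
  then obtain u v where "u \<in> cmp_V t ns" "v \<in> cmp_V t ns" "fst u \<noteq> fst v" "cmp_V t ns - S = {u, v}"
    using S(3) small_transversal_card_2_iff[of "cmp_V t ns - S"] by blast
  moreover from this(4) have "S = cmp_V t ns - {u, v}" using S(1) by blast
  ultimately show "\<exists>u\<in>cmp_V t ns. \<exists>v\<in>cmp_V t ns. fst u \<noteq> fst v \<and> S = cmp_V t ns - {u, v}"
    by blast
next
  assume "\<exists>u\<in>cmp_V t ns. \<exists>v\<in>cmp_V t ns. fst u \<noteq> fst v \<and> S = cmp_V t ns - {u, v}"
  then obtain u v where uv: "u \<in> cmp_V t ns" "v \<in> cmp_V t ns" "fst u \<noteq> fst v"
    and S: "S = cmp_V t ns - {u, v}" by blast
  have "cmp_V t ns - S = {u, v}" using uv(1,2) S by blast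
  moreover have "card {u, v} = 2 \<and> inj_on fst {u, v}" using uv small_transversal_card_2_iff[of "{u, v}"] by blast
  ultimately show "minimal_skew_forcing_set (cmp_V t ns) (cmp_E t ns) S"
    using S cmp_V_finite cmp_large_skew_forcing_sets
    by (intro minimal_skew_forcing_set_if_card_Diff_2) (auto simp: skew_forcing_set_iff)
qed

lemma skew_TAR_vertex_card_iff:
  "S \<in> skew_TAR_vertices (cmp_V t ns) (cmp_E t ns) \<and> card S = card (cmp_V t ns) - 2 \<longleftrightarrow>
    (\<exists>u\<in>cmp_V t ns. \<exists>v\<in>cmp_V t ns. fst u \<noteq> fst v \<and> S = cmp_V t ns - {u, v})"
proof -
  have "card S = card (cmp_V t ns) - card (cmp_V t ns - S)" if "S \<subseteq> cmp_V t ns"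
    using that cmp_V_finite by (metis card_Diff_subset double_diff finite_Diff order_refl Diff_subset)
  then have "S \<in> skew_TAR_vertices (cmp_V t ns) (cmp_E t ns) \<and> card S = card (cmp_V t ns) - 2 \<longleftrightarrow>
      S \<subseteq> cmp_V t ns \<and> card (cmp_V t ns - S) = 2 \<and> inj_on fst (cmp_V t ns - S)"
    using two_le_card unfolding skew_TAR_vertices_def skew_forcing_set_iff by auto
  also have "\<dots> \<longleftrightarrow> (\<exists>u\<in>cmp_V t ns. \<exists>v\<in>cmp_V t ns. fst u \<noteq> fst v \<and> S = cmp_V t ns - {u, v})"
    using small_transversal_card_2_iff[of "cmp_V t ns - S"] by blast
  finally show ?thesis .
qed

lemma skew_TAR_degree_Diff_eq:
  assumes "A \<subseteq> cmp_V t ns"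
  shows "skew_TAR_degree (cmp_V t ns) (cmp_E t ns) (cmp_V t ns - A) =
    card {s \<in> cmp_V t ns. small_transversal (sym_diff A {s})}"
proof -
  have "cmp_V t ns - sym_diff A {s} \<in> skew_TAR_vertices (cmp_V t ns) (cmp_E t ns) \<longleftrightarrow>
      small_transversal (sym_diff A {s})" if "s \<in> cmp_V t ns" for s
    using that assms by (intro Diff_in_skew_TAR_vertices_iff) blast
  then have "{s \<in> cmp_V t ns. cmp_V t ns - sym_diff A {s} \<in> skew_TAR_vertices (cmp_V t ns) (cmp_E t ns)}
      = {s \<in> cmp_V t ns. small_transversal (sym_diff A {s})}"
    by blast
  then show ?thesis by (simp add: skew_TAR_degree_Diff[OF assms])
qed

lemma skew_TAR_degree_delete_vertex:
  assumes "y \<in> cmp_V t ns"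
  shows "skew_TAR_degree (cmp_V t ns) (cmp_E t ns) (cmp_V t ns - {y}) =
    card (insert y {w \<in> cmp_V t ns. fst w \<noteq> fst y})"
proof -
  have "sym_diff {y} {s} = (if s = y then {} else {y, s})" for s by auto
  then have "{s \<in> cmp_V t ns. small_transversal (sym_diff {y} {s})} =
      insert y {w \<in> cmp_V t ns. fst w \<noteq> fst y}"
    using assms by auto
  then show ?thesis using assms by (simp add: skew_TAR_degree_Diff_eq)
qed

lemma skew_TAR_degree_delete_vertex_eq:
  assumes "y \<in> cmp_V t ns"
  shows "skew_TAR_degree (cmp_V t ns) (cmp_E t ns) (cmp_V t ns - {y}) =
    card (cmp_V t ns) - ns (fst y) + 1"
proof -
  let ?part = "{w \<in> cmp_V t ns. fst w = fst y}" and ?others = "{w \<in> cmp_V t ns. fst w \<noteq> fst y}"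
  have "fst y < t" using assms by (cases y) (simp add: cmp_V_def)
  have fin: "finite ?part" "finite ?others" using cmp_V_finite by simp_all
  have "?others = cmp_V t ns - ?part" by blast
  moreover have "card (cmp_V t ns - ?part) = card (cmp_V t ns) - card ?part"
    by (rule card_Diff_subset[OF fin(1)]) blast
  ultimately have "card ?others = card (cmp_V t ns) - ns (fst y)"
    using cmp_part_card[OF \<open>fst y < t\<close>] by (simp only:)
  moreover have "card (insert y ?others) = Suc (card ?others)"
    by (rule card_insert_disjoint[OF fin(2)]) simp
  ultimately show ?thesis by (simp only: skew_TAR_degree_delete_vertex[OF assms] Suc_eq_plus1)
qed

lemma skew_TAR_degree_delete_pair:
  assumes "u \<in> cmp_V t ns" "v \<in> cmp_V t ns" "fst u \<noteq> fst v"
  shows "skew_TAR_degree (cmp_V t ns) (cmp_E t ns) (cmp_V t ns - {u, v}) = 2"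
proof -
  have "u \<noteq> v" using assms(3) by blast
  have "small_transversal (sym_diff {u, v} {s}) \<longleftrightarrow> s \<in> {u, v}"
    for s
  proof (cases "s \<in> {u, v}")
    case True
    then show ?thesis using \<open>u \<noteq> v\<close> by (auto intro: inj_onI)
  next
    case False
    then have "sym_diff {u, v} {s} = {u, v, s}" by blast
    moreover have "card {u, v, s} = 3" using False \<open>u \<noteq> v\<close> by (simp add: eq_commute)
    ultimately show ?thesis using False by simp
  qed
  then have "{s \<in> cmp_V t ns. small_transversal (sym_diff {u, v} {s})} =
      {u, v}"
    using assms(1,2) by blast
  then show ?thesis using assms \<open>u \<noteq> v\<close> by (simp add: skew_TAR_degree_Diff_eq)
qed

lemma high_degree_skew_TAR_vertexE:
  assumes "P \<in> skew_TAR_vertices (cmp_V t ns) (cmp_E t ns)"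
    and "3 \<le> skew_TAR_degree (cmp_V t ns) (cmp_E t ns) P"
  obtains "P = cmp_V t ns" | y where "y \<in> cmp_V t ns" "P = cmp_V t ns - {y}"
proof -
  define A where "A = cmp_V t ns - P"
  have P: "P = cmp_V t ns - A" "A \<subseteq> cmp_V t ns"
    using skew_TAR_vertices_subset[OF assms(1)] unfolding A_def by blast+
  then have A: "card A \<le> 2" "inj_on fst A"
    using assms(1) Diff_in_skew_TAR_vertices_iff by blast+
  have "card A \<noteq> 2"
  proof
    assume "card A = 2"
    then obtain u v where "u \<in> cmp_V t ns" "v \<in> cmp_V t ns" "fst u \<noteq> fst v" "A = {u, v}"
      using A(2) small_transversal_card_2_iff[OF P(2)] by blast
    then show False using assms(2) skew_TAR_degree_delete_pair P(1) by simp
  qed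
  from finite_subset[OF P(2) cmp_V_finite] A(1) show thesis
  proof (cases rule: card_le_2_cases)
    case 1
    then show ?thesis using P that(1) by simp
  next
    case (2 y)
    then show ?thesis using P that(2) by blast
  next
    case (3 u v)
    then show ?thesis using \<open>card A \<noteq> 2\<close> by simp
  qed
qed

lemma high_degree_TAR_adj:
  assumes "P \<in> skew_TAR_vertices (cmp_V t ns) (cmp_E t ns)" "Q \<in> skew_TAR_vertices (cmp_V t ns) (cmp_E t ns)"
    and "3 \<le> skew_TAR_degree (cmp_V t ns) (cmp_E t ns) P" "3 \<le> skew_TAR_degree (cmp_V t ns) (cmp_E t ns) Q"
    and "TAR_adj P Q"
  shows "P = cmp_V t ns \<or> Q = cmp_V t ns"
proof (rule ccontr)
  assume "\<not> (P = cmp_V t ns \<or> Q = cmp_V t ns)"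
  then obtain y z where "y \<in> cmp_V t ns" "P = cmp_V t ns - {y}" "z \<in> cmp_V t ns" "Q = cmp_V t ns - {z}"
    using high_degree_skew_TAR_vertexE[OF assms(1,3)] high_degree_skew_TAR_vertexE[OF assms(2,4)] by metis
  then show False using assms(5) not_TAR_adj_singletons TAR_adj_Diff by (metis empty_subsetI insert_subset)
qed

section \<open>Uniqueness of the skew TAR graph\<close>

lemma no_high_degree_path:
  assumes "\<forall>Q\<in>{Q1, Q2, Q3, Q4}. Q \<in> skew_TAR_vertices (cmp_V t ns) (cmp_E t ns) \<and>
      3 \<le> skew_TAR_degree (cmp_V t ns) (cmp_E t ns) Q"
    and "TAR_adj Q1 Q2" "TAR_adj Q2 Q3" "TAR_adj Q3 Q4" "Q1 \<noteq> Q3" "Q2 \<noteq> Q4"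
  shows False
proof -
  have "Q1 = cmp_V t ns \<or> Q2 = cmp_V t ns" "Q2 = cmp_V t ns \<or> Q3 = cmp_V t ns"
    "Q3 = cmp_V t ns \<or> Q4 = cmp_V t ns"
    using high_degree_TAR_adj[OF _ _ _ _ assms(2)] high_degree_TAR_adj[OF _ _ _ _ assms(3)]
      high_degree_TAR_adj[OF _ _ _ _ assms(4)] assms(1) by simp_all
  moreover have "Q2 \<noteq> Q3" using assms(3) not_TAR_adj_self by blast
  ultimately show False using assms(5,6) by blast
qed

lemma skew_TAR_isomorphism_large_skew_forcing_sets:
  fixes V' :: "'b set"
  assumes "simple_graph V' E'"
    and iso: "skew_TAR_isomorphism \<phi> V' E' (cmp_V t ns) (cmp_E t ns)"
  shows "large_skew_forcing_sets V' E'"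
proof (intro allI impI)
  fix S assume S: "skew_forcing_set V' E' S"
  show "card (V' - S) \<le> 2"
  proof (rule ccontr)
    note \<phi> = graph_isomorphismD[OF iso]
    assume "\<not> card (V' - S) \<le> 2"
    then have "3 \<le> card (V' - S)" by simp
    then obtain P1 P2 P3 P4
      where P: "\<forall>P\<in>{P1, P2, P3, P4}. P \<in> skew_TAR_vertices V' E' \<and> 3 \<le> skew_TAR_degree V' E' P"
      and adj: "TAR_adj P1 P2" "TAR_adj P2 P3" "TAR_adj P3 P4" and neq: "P1 \<noteq> P3" "P2 \<noteq> P4"
      by (rule skew_TAR_high_degree_path[OF simple_graphD(1)[OF assms(1)] S])
    have "\<forall>Q\<in>{\<phi> P1, \<phi> P2, \<phi> P3, \<phi> P4}. Q \<in> skew_TAR_vertices (cmp_V t ns) (cmp_E t ns) \<and>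
        3 \<le> skew_TAR_degree (cmp_V t ns) (cmp_E t ns) Q"
      using P \<phi>(1) skew_TAR_isomorphism_degree[OF iso] by simp
    moreover have "TAR_adj (\<phi> P1) (\<phi> P2)" "TAR_adj (\<phi> P2) (\<phi> P3)" "TAR_adj (\<phi> P3) (\<phi> P4)"
      using adj \<phi>(4) P by simp_all
    moreover have "\<phi> P1 \<noteq> \<phi> P3" "\<phi> P2 \<noteq> \<phi> P4" using neq inj_onD[OF \<phi>(2)] P by (metis insertCI)+
    ultimately show False by (rule no_high_degree_path)
  qed
qed

lemma star_shape_if_degrees:
  assumes "y0 \<in> cmp_V t ns"
    and "skew_TAR_degree (cmp_V t ns) (cmp_E t ns) (cmp_V t ns - {y0}) = card (cmp_V t ns)"
    and "\<forall>z\<in>cmp_V t ns. z \<noteq> y0 \<longrightarrow> skew_TAR_degree (cmp_V t ns) (cmp_E t ns) (cmp_V t ns - {z}) \<le> 2"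
  shows "\<forall>w\<in>cmp_V t ns. w \<noteq> y0 \<longrightarrow> fst w \<noteq> fst y0"
    and "\<forall>w\<in>cmp_V t ns. \<forall>w'\<in>cmp_V t ns. w \<noteq> y0 \<longrightarrow> w' \<noteq> y0 \<longrightarrow> fst w = fst w'"
proof -
  let ?others = "\<lambda>z. {w \<in> cmp_V t ns. fst w \<noteq> fst z}"
  have "card (insert y0 (?others y0)) = card (cmp_V t ns)"
    unfolding skew_TAR_degree_delete_vertex[OF assms(1), symmetric] by (rule assms(2))
  then have "insert y0 (?others y0) = cmp_V t ns"
    by (rule card_subset_eq[OF cmp_V_finite, rotated]) (use assms(1) in blast)
  then show y0_alone: "\<forall>w\<in>cmp_V t ns. w \<noteq> y0 \<longrightarrow> fst w \<noteq> fst y0" by blast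
  have others: "?others z = {y0}" if "z \<in> cmp_V t ns" "z \<noteq> y0" for z
  proof -
    have "y0 \<in> ?others z" "z \<notin> ?others z" using y0_alone assms(1) that by auto
    have fin: "finite (?others z)" using cmp_V_finite by simp
    have "card (insert z (?others z)) \<le> 2"
      unfolding skew_TAR_degree_delete_vertex[OF that(1), symmetric] using assms(3) that by blast
    then have "card (?others z) \<le> 1"
      using card_insert_disjoint[OF fin \<open>z \<notin> ?others z\<close>] by linarith
    then show ?thesis using card_le_1_eq_singleton[OF fin] \<open>y0 \<in> ?others z\<close> by blast
  qed
  show "\<forall>w\<in>cmp_V t ns. \<forall>w'\<in>cmp_V t ns. w \<noteq> y0 \<longrightarrow> w' \<noteq> y0 \<longrightarrow> fst w = fst w'"
  proof (intro ballI impI)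
    fix w w' assume w: "w \<in> cmp_V t ns" "w' \<in> cmp_V t ns" "w \<noteq> y0" "w' \<noteq> y0"
    then have "w' \<notin> ?others w" using others[OF w(1,3)] by simp
    then show "fst w = fst w'" using w(2) by simp
  qed
qed

lemma star_small_transversal_iff:
  assumes "y0 \<in> cmp_V t ns" "\<forall>w\<in>cmp_V t ns. w \<noteq> y0 \<longrightarrow> fst w \<noteq> fst y0"
    and "\<forall>w\<in>cmp_V t ns. \<forall>w'\<in>cmp_V t ns. w \<noteq> y0 \<longrightarrow> w' \<noteq> y0 \<longrightarrow> fst w = fst w'"
    and "A \<subseteq> cmp_V t ns"
  shows "small_transversal A \<longleftrightarrow> card (A - {y0}) \<le> 1"
proof
  assume "small_transversal A"
  then have "\<forall>w\<in>A - {y0}. \<forall>w'\<in>A - {y0}. w = w'"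
    using assms(3,4) by (auto dest: inj_onD)
  then show "card (A - {y0}) \<le> 1"
    using finite_subset[OF assms(4) cmp_V_finite] by (simp add: card_le_Suc0_iff_eq)
next
  assume "card (A - {y0}) \<le> 1"
  then have same: "\<forall>w\<in>A - {y0}. \<forall>w'\<in>A - {y0}. w = w'"
    using finite_subset[OF assms(4) cmp_V_finite] by (simp add: card_le_Suc0_iff_eq)
  obtain w where w: "A \<subseteq> {y0, w}"
  proof (cases "A - {y0} = {}")
    case True
    then show ?thesis using that by blast
  next
    case False
    then obtain w where "w \<in> A - {y0}" by blast
    then show ?thesis using that same by blast
  qed
  have "card {y0, w} \<le> 2" by (cases "y0 = w") simp_all
  then have "card A \<le> 2" using card_mono[OF _ w] by simp
  moreover have "inj_on fst A"
  proof (rule inj_onI)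
    fix x x' assume x: "x \<in> A" "x' \<in> A" "fst x = fst x'"
    show "x = x'"
    proof (rule ccontr)
      assume "x \<noteq> x'"
      moreover have "x \<in> {y0, w}" "x' \<in> {y0, w}" using x(1,2) w by blast+
      ultimately have "x = y0 \<and> x' = w \<or> x = w \<and> x' = y0" by blast
      then have "w \<noteq> y0" "w \<in> A" "fst w = fst y0" using x \<open>x \<noteq> x'\<close> by auto
      then show False using assms(2,4) by blast
    qed
  qed
  ultimately show "small_transversal A" ..
qed

lemma star_sym_diff_closed:
  assumes "y0 \<in> cmp_V t ns" "\<forall>w\<in>cmp_V t ns. w \<noteq> y0 \<longrightarrow> fst w \<noteq> fst y0"
    and "\<forall>w\<in>cmp_V t ns. \<forall>w'\<in>cmp_V t ns. w \<noteq> y0 \<longrightarrow> w' \<noteq> y0 \<longrightarrow> fst w = fst w'"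
    and "S \<in> skew_TAR_vertices (cmp_V t ns) (cmp_E t ns)"
  shows "sym_diff S {y0} \<in> skew_TAR_vertices (cmp_V t ns) (cmp_E t ns)"
proof -
  define A where "A = cmp_V t ns - S"
  have A: "A \<subseteq> cmp_V t ns" "S = cmp_V t ns - A" "sym_diff S {y0} = cmp_V t ns - sym_diff A {y0}"
    using skew_TAR_vertices_subset[OF assms(4)] assms(1) unfolding A_def by blast+
  have sub: "sym_diff A {y0} \<subseteq> cmp_V t ns" using A(1) assms(1) by blast
  have "small_transversal A"
    using assms(4) A(1,2) Diff_in_skew_TAR_vertices_iff by blast
  then have "card (A - {y0}) \<le> 1" using star_small_transversal_iff[OF assms(1-3) A(1)] by blast
  moreover have "sym_diff A {y0} - {y0} = A - {y0}" by blast
  ultimately have "small_transversal (sym_diff A {y0})"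
    using star_small_transversal_iff[OF assms(1-3) sub] by simp
  then show ?thesis using A(3) Diff_in_skew_TAR_vertices_iff[OF sub] by simp
qed

lemma two_vertices_skew_TAR_vertices:
  assumes "cmp_V t ns = {u, v}" "fst u \<noteq> fst v" "S \<subseteq> cmp_V t ns"
  shows "S \<in> skew_TAR_vertices (cmp_V t ns) (cmp_E t ns)"
proof -
  have "cmp_V t ns - S \<subseteq> {u, v}" using assms(1) by blast
  moreover have "card {u, v} \<le> 2" "inj_on fst {u, v}" using assms(2) by (auto simp: card_insert_if)
  ultimately have "card (cmp_V t ns - S) \<le> 2" "inj_on fst (cmp_V t ns - S)"
    using card_mono[of "{u, v}" "cmp_V t ns - S"] inj_on_subset[of fst "{u, v}"] by simp_all
  then show ?thesis using assms(3) by (simp add: skew_TAR_vertices_def skew_forcing_set_iff)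
qed

lemma skew_TAR_isomorphism_sym_diff_closed:
  fixes V' :: "'b set"
  assumes G': "simple_graph V' E'" "no_isolated_vertices V' E'"
    and iso: "skew_TAR_isomorphism \<phi> V' E' (cmp_V t ns) (cmp_E t ns)"
    and S: "S \<in> skew_TAR_vertices (cmp_V t ns) (cmp_E t ns)"
  shows "sym_diff S (cmp_V t ns - \<phi> V') \<in> skew_TAR_vertices (cmp_V t ns) (cmp_E t ns)"
proof -
  let ?V = "cmp_V t ns" and ?E = "cmp_E t ns"
  let ?F = "skew_TAR_vertices ?V ?E"
  have whole': "V' \<in> skew_TAR_vertices V' E'"
    by (simp add: skew_TAR_vertices_def skew_forcing_set_whole)
  have X0: "\<phi> V' \<in> ?F" by (rule graph_isomorphismD(1)[OF iso whole'])
  define C where "C = ?V - \<phi> V'"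
  have C: "C \<subseteq> ?V" "\<phi> V' = ?V - C"
    using skew_TAR_vertices_subset[OF X0] unfolding C_def by blast+
  then have adm: "card C \<le> 2" "inj_on fst C" using X0 Diff_in_skew_TAR_vertices_iff by auto
  have "skew_TAR_degree ?V ?E (\<phi> V') = card V'"
    using skew_TAR_isomorphism_degree[OF iso whole'] skew_TAR_degree_whole[OF G'] by simp
  then have deg: "skew_TAR_degree ?V ?E (?V - C) = card ?V"
    using skew_TAR_isomorphism_card_eq[OF G' cmp_simple_graph cmp_no_isolated_vertices iso] C(2) by simp
  from finite_subset[OF C(1) cmp_V_finite] adm(1) have "sym_diff S C \<in> ?F"
  proof (cases rule: card_le_2_cases)
    case 1
    then show ?thesis using S by simp
  next
    case (2 y0)
    then have y0: "y0 \<in> ?V" using C(1) by blast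
    have "skew_TAR_degree ?V ?E (?V - {z}) \<le> 2" if "z \<in> ?V" "z \<noteq> y0" for z
      using skew_TAR_isomorphism_whole_to_delete_vertex[OF simple_graphD(1)[OF G'(1)]
          skew_TAR_isomorphism_large_skew_forcing_sets[OF G'(1) iso] cmp_simple_graph cmp_no_isolated_vertices iso
          y0 _ that] C(2) 2 by simp
    then have "\<forall>z\<in>?V. z \<noteq> y0 \<longrightarrow> skew_TAR_degree ?V ?E (?V - {z}) \<le> 2" by blast
    \<comment> \<open>\<open>K\<close> is a star with centre \<open>y0\<close>, whose TAR graph is symmetric under toggling \<open>y0\<close>\<close>
    note star = star_shape_if_degrees[OF y0 deg[unfolded 2] this]
    show ?thesis using star_sym_diff_closed[OF y0 star S] 2 by simp
  next
    case (3 u v)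
    have uv: "u \<in> ?V" "v \<in> ?V" using C(1) 3 by blast+
    have "inj_on fst {u, v}" using adm(2) 3 by simp
    then have "fst u \<noteq> fst v" using 3(2) by (auto dest: inj_onD)
    then have "card ?V = card {u, v}" using deg 3 skew_TAR_degree_delete_pair[OF uv] by simp
    then have "{u, v} = ?V" using card_subset_eq[OF cmp_V_finite, of "{u, v}"] uv by simp
    moreover have "sym_diff S C \<subseteq> ?V" using skew_TAR_vertices_subset[OF S] C(1) by blast
    ultimately show ?thesis
      using two_vertices_skew_TAR_vertices[OF _ \<open>fst u \<noteq> fst v\<close>] by simp
  qed
  then show ?thesis unfolding C_def .
qed

lemma skew_TAR_isomorphism_normalize:
  fixes V' :: "'b set"
  assumes G': "simple_graph V' E'" "no_isolated_vertices V' E'"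
    and iso: "skew_TAR_isomorphism \<phi> V' E' (cmp_V t ns) (cmp_E t ns)"
  obtains \<phi>' where "skew_TAR_isomorphism \<phi>' V' E' (cmp_V t ns) (cmp_E t ns)" "\<phi>' V' = cmp_V t ns"
proof -
  let ?C = "cmp_V t ns - \<phi> V'"
  have whole': "V' \<in> skew_TAR_vertices V' E'"
    by (simp add: skew_TAR_vertices_def skew_forcing_set_whole)
  have "skew_TAR_isomorphism ((\<lambda>S. sym_diff S ?C) \<circ> \<phi>) V' E' (cmp_V t ns) (cmp_E t ns)"
    using skew_TAR_isomorphism_sym_diff_closed[OF G' iso]
    by (intro graph_isomorphism_comp[OF iso skew_TAR_isomorphism_sym_diff]) blast
  moreover have "((\<lambda>S. sym_diff S ?C) \<circ> \<phi>) V' = cmp_V t ns"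
    using skew_TAR_vertices_subset[OF graph_isomorphismD(1)[OF iso whole']] by auto
  ultimately show thesis by (rule that)
qed

lemma skew_TAR_unique:
  fixes V' :: "'b set"
  assumes "simple_graph V' E'" "no_isolated_vertices V' E'"
    and "graph_iso (skew_TAR_vertices V' E') TAR_adj
           (skew_TAR_vertices (cmp_V t ns) (cmp_E t ns)) TAR_adj"
  shows "graph_iso V' E' (cmp_V t ns) (cmp_E t ns)"
proof -
  obtain \<phi> where "skew_TAR_isomorphism \<phi> V' E' (cmp_V t ns) (cmp_E t ns)"
    using assms(3) unfolding graph_iso_iff_isomorphism by blast
  then obtain \<phi>' where \<phi>': "skew_TAR_isomorphism \<phi>' V' E' (cmp_V t ns) (cmp_E t ns)" "\<phi>' V' = cmp_V t ns"
    using skew_TAR_isomorphism_normalize[OF assms(1,2)] by blast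
  show ?thesis
    using skew_TAR_isomorphism_whole_imp_graph_iso[OF assms(1,2)
        skew_TAR_isomorphism_large_skew_forcing_sets[OF assms(1) \<phi>'(1)]
        cmp_simple_graph cmp_no_isolated_vertices cmp_large_skew_forcing_sets \<phi>'] .
qed

end

theorem theorem5p2:
  fixes t :: nat and ns :: "nat \<Rightarrow> nat"
  assumes "t \<ge> 2" and "\<forall>i<t. ns i \<ge> 1"
  defines "V \<equiv> cmp_V t ns" and "E \<equiv> cmp_E t ns" and "n \<equiv> (\<Sum>i<t. ns i)"
  shows "(\<forall>S. minimal_skew_forcing_set V E S \<longleftrightarrow>
            (\<exists>u\<in>V. \<exists>v\<in>V. fst u \<noteq> fst v \<and> S = V - {u, v}))
       \<and> (\<forall>S. (S \<in> skew_TAR_vertices V E \<and> card S = n - 2) \<longleftrightarrow>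
            (\<exists>u\<in>V. \<exists>v\<in>V. fst u \<noteq> fst v \<and> S = V - {u, v}))
       \<and> (\<forall>u\<in>V. \<forall>v\<in>V. fst u \<noteq> fst v \<longrightarrow> skew_TAR_degree V E (V - {u, v}) = 2)
       \<and> (\<forall>y\<in>V. skew_forcing_set V E (V - {y}) \<and>
            skew_TAR_degree V E (V - {y}) = n - ns (fst y) + 1)
       \<and> (\<forall>(V' :: 'b set) E'. simple_graph V' E' \<and> (\<forall>x\<in>V'. \<exists>y. E' x y) \<and>
            graph_iso (skew_TAR_vertices V' E') TAR_adj (skew_TAR_vertices V E) TAR_adj
            \<longrightarrow> graph_iso V' E' V E)"
proof -
  interpret complete_multipartite t ns using assms(1,2) by unfold_locales
  have n: "n = card V" unfolding n_def V_def by (rule cmp_V_card[symmetric])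
  show ?thesis
    unfolding n V_def E_def
    by (intro conjI allI ballI impI; (elim conjE)?;
        rule minimal_skew_forcing_set_iff skew_TAR_vertex_card_iff skew_TAR_degree_delete_pair
          skew_forcing_set_delete_vertex[OF cmp_simple_graph cmp_no_isolated_vertices]
          skew_TAR_degree_delete_vertex_eq skew_TAR_unique; assumption)
qed

end
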